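(* Let $p\in\mathbb{N}$, $0\le\lambda\le1$. Let $f$ be analytic in $\mathrm{U}=\{|z|<1\}$ of the form $f(z)=z^p+\sum_{k=p+1}^\infty a_kz^k$, put $\mathcal{F}_\lambda(z)=(1-\lambda)f(z)+\lambda zf'(z)$, and assume $\mathcal{F}_\lambda(z)\mathcal{F}_\lambda'(z)\neq0$ for all $z\in\mathrm{U}\setminus\{0\}$. Let $c=1+\lambda(p-1)$, $\delta\in[0,c)$, and $$\rho_1=\begin{cases} p-\dfrac{\delta}{2(c-\delta)}, & \delta\in[0,c/2],\\[2mm] p-\dfrac{c-\delta}{2\delta}, & \delta\in[c/2,c).\end{cases}$$ If $$\operatorname{Re}\frac{zf'(z)+\lambda z^2f''(z)}{(1-\lambda)f(z)+\lambda zf'(z)}>\rho_1,\quad z\in\mathrm{U},$$ then $\operatorname{Re}\dfrac{\mathcal{F}_\lambda(z)}{z^p}>\delta$ for all $z\in\mathrm{U}$.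
   Context: The quotient in the hypothesis equals $z\mathcal{F}_\lambda'(z)/\mathcal{F}_\lambda(z)$; the paper phrases the hypothesis as $f\in\mathcal{T}_\lambda(p;\rho_1)$ and the conclusion as $f\in\mathcal{N}^\lambda_{p,1}(1,0;\delta)$, which amount to the displayed inequalities. *)

theory Defs
  imports "HOL-Analysis.Analysis"
begin

definition Flam :: "real \<Rightarrow> (complex \<Rightarrow> complex) \<Rightarrow> complex \<Rightarrow> complex" where
  "Flam lam f z = (1 - of_real lam) * f z + of_real lam * z * deriv f z"

definition rho1 :: "nat \<Rightarrow> real \<Rightarrow> real \<Rightarrow> real" where
  "rho1 p lam \<delta> = (let c = 1 + lam * (real p - 1) in
     if \<delta> \<le> c / 2 then real p - \<delta> / (2 * (c - \<delta>)) else real p - (c - \<delta>) / (2 * \<delta>))"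

end

theory Submission
  imports Defs "HOL-Complex_Analysis.Complex_Analysis"
begin

text \<open>
  Write \<open>F\<^sub>\<lambda>(z) = c z\<^sup>p q(z)\<close> with \<open>q(0) = 1\<close>, \<open>c = 1 + \<lambda>(p - 1)\<close>. Then the hypothesis says
  \<open>Re (z q'(z)/q(z)) > -\<gamma>(\<delta>/c)\<close>, with \<open>\<gamma> = jack_gamma\<close>, and the claim is \<open>Re q > \<delta>/c\<close>. If \<open>Re q\<close> reaches the level
  \<open>\<beta> = \<delta>/c\<close>, let \<open>z\<^sub>0\<close> be a point of least modulus where it does. The map
  \<open>w = (q - 1)/(q + 1 - 2\<beta>)\<close> sends the half-plane \<open>Re > \<beta>\<close> into the unit disc, so \<open>|w| < 1\<close>
  on \<open>|z| < |z\<^sub>0|\<close> and \<open>|w(z\<^sub>0)| = 1\<close>. Jack's lemma (the Schwarz lemma radially, maximality of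
  \<open>|w|\<close> on the circle tangentially) gives \<open>z\<^sub>0 w'(z\<^sub>0) = k w(z\<^sub>0)\<close> with \<open>k \<ge> 1\<close>. Pulled back
  to \<open>q\<close>, this makes \<open>z\<^sub>0 q'(z\<^sub>0)/q(z\<^sub>0)\<close> an explicit expression in \<open>k\<close> and \<open>Im q(z\<^sub>0)\<close> whose
  real part is at most \<open>-\<gamma>(\<beta>)\<close>, a contradiction.
\<close>

lemma norm_add_sq_minus_norm_sub_one_sq:
  fixes a :: complex and \<beta> :: real
  shows "(norm (a + of_real (1 - 2*\<beta>)))\<^sup>2 - (norm (a - 1))\<^sup>2 = 4 * (Re a - \<beta>) * (1 - \<beta>)"
proof -
  have "(norm (a - 1))\<^sup>2 = (Re a - 1)\<^sup>2 + (Im a)\<^sup>2"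
    and "(norm (a + of_real (1 - 2*\<beta>)))\<^sup>2 = (Re a + (1 - 2*\<beta>))\<^sup>2 + (Im a)\<^sup>2"
    by (simp_all add: cmod_power2)
  then show ?thesis by (simp add: power2_eq_square algebra_simps)
qed

lemma norm_sub_one_le_iff:
  fixes a :: complex and \<beta> :: real
  assumes "\<beta> < 1"
  shows "norm (a - 1) \<le> norm (a + of_real (1 - 2*\<beta>)) \<longleftrightarrow> \<beta> \<le> Re a"
proof -
  have "norm (a - 1) \<le> norm (a + of_real (1 - 2*\<beta>)) \<longleftrightarrow>
        (norm (a - 1))\<^sup>2 \<le> (norm (a + of_real (1 - 2*\<beta>)))\<^sup>2"
    using abs_le_square_iff by (metis abs_norm_cancel)
  also have "\<dots> \<longleftrightarrow> 0 \<le> 4 * (Re a - \<beta>) * (1 - \<beta>)"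
    using norm_add_sq_minus_norm_sub_one_sq[of a \<beta>] by linarith
  also have "\<dots> \<longleftrightarrow> \<beta> \<le> Re a"
    using assms by (simp add: zero_le_mult_iff)
  finally show ?thesis .
qed

lemma norm_sub_one_less_iff:
  fixes a :: complex and \<beta> :: real
  assumes "\<beta> < 1"
  shows "norm (a - 1) < norm (a + of_real (1 - 2*\<beta>)) \<longleftrightarrow> \<beta> < Re a"
proof -
  have "norm (a - 1) < norm (a + of_real (1 - 2*\<beta>)) \<longleftrightarrow>
        (norm (a - 1))\<^sup>2 < (norm (a + of_real (1 - 2*\<beta>)))\<^sup>2"
    using abs_le_square_iff by (metis abs_norm_cancel not_le)
  also have "\<dots> \<longleftrightarrow> 0 < 4 * (Re a - \<beta>) * (1 - \<beta>)"
    using norm_add_sq_minus_norm_sub_one_sq[of a \<beta>] by linarith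
  also have "\<dots> \<longleftrightarrow> \<beta> < Re a"
    using assms by (simp add: zero_less_mult_iff)
  finally show ?thesis .
qed

lemma Schwarz_Lemma_ball:
  fixes w :: "complex \<Rightarrow> complex"
  assumes "w holomorphic_on ball 0 r" "w 0 = 0" "\<And>z. norm z < r \<Longrightarrow> norm (w z) < 1"
    and "norm z < r"
  shows "r * norm (w z) \<le> norm z"
proof -
  have "r > 0" using assms(4) norm_ge_zero[of z] by linarith
  define h where "h \<xi> = w (of_real r * \<xi>)" for \<xi>
  have "h holomorphic_on ball 0 1"
    unfolding h_def using \<open>r > 0\<close>
    by (intro holomorphic_on_compose_gen[OF _ assms(1), unfolded o_def])
       (auto intro: holomorphic_intros simp: norm_mult)
  moreover have "norm (h \<xi>) < 1" if "norm \<xi> < 1" for \<xi>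
    using assms(3) that \<open>r > 0\<close> by (simp add: h_def norm_mult)
  ultimately have "norm (h (z / of_real r)) \<le> norm (z / of_real r)"
    using Schwarz_Lemma(1)[of h "z / of_real r"] assms(2,4) \<open>r > 0\<close> by (simp add: h_def norm_divide)
  moreover have "h (z / of_real r) = w z" using \<open>r > 0\<close> by (simp add: h_def)
  ultimately show ?thesis using \<open>r > 0\<close> by (simp add: norm_divide le_divide_eq mult.commute)
qed

lemma has_real_derivative_Re_of_real:
  fixes g :: "complex \<Rightarrow> complex"
  assumes "(g has_field_derivative D) (at (of_real a))"
  shows "((\<lambda>t. Re (g (of_real t))) has_real_derivative Re D) (at a)"
  using has_vector_derivative_real_field[OF assms] unfolding has_vector_derivative_complex_iff by simp

text \<open>When \<open>|w z\<^sub>0| = 1\<close>, the quantity \<open>cnj (w z\<^sub>0) * D * z\<^sub>0\<close> is \<open>z\<^sub>0 w'(z\<^sub>0) / w(z\<^sub>0)\<close>.\<close>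

lemma boundary_max_logderiv_real:
  fixes w :: "complex \<Rightarrow> complex"
  assumes w': "(w has_field_derivative D) (at z0)"
    and le: "\<And>z. norm z = norm z0 \<Longrightarrow> norm (w z) \<le> 1" and eq: "norm (w z0) = 1"
  shows "Im (cnj (w z0) * D * z0) = 0"
proof -
  define \<phi> where "\<phi> t = Re (cnj (w z0) * w (z0 * exp (\<i> * of_real t)))" for t
  have "((\<lambda>s. cnj (w z0) * w (z0 * exp (\<i> * s))) has_field_derivative cnj (w z0) * (D * (z0 * \<i>)))
          (at (of_real 0))"
    using w' by (auto intro!: derivative_eq_intros DERIV_chain2[where f=w])
  then have \<phi>': "(\<phi> has_field_derivative Re (cnj (w z0) * (D * (z0 * \<i>)))) (at 0)"
    unfolding \<phi>_def by (rule has_real_derivative_Re_of_real)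
  have max: "\<phi> t \<le> \<phi> 0" for t
  proof -
    have "\<phi> t \<le> norm (cnj (w z0) * w (z0 * exp (\<i> * of_real t)))"
      unfolding \<phi>_def by (rule complex_Re_le_cmod)
    also have "\<dots> \<le> 1" using le[of "z0 * exp (\<i> * of_real t)"] eq by (simp add: norm_mult)
    also have "1 = \<phi> 0" using eq by (simp add: \<phi>_def complex_norm_square[symmetric] mult.commute)
    finally show ?thesis .
  qed
  have "Re (cnj (w z0) * (D * (z0 * \<i>))) = 0"
    by (rule DERIV_local_max[OF \<phi>' zero_less_one]) (simp add: max)
  then show ?thesis by (simp add: algebra_simps)
qed

lemma boundary_max_logderiv_ge_one:
  fixes w :: "complex \<Rightarrow> complex"
  assumes w': "(w has_field_derivative D) (at z0)"
    and radial: "\<And>t. 0 \<le> t \<Longrightarrow> t < 1 \<Longrightarrow> norm (w (of_real t * z0)) \<le> t" and eq: "norm (w z0) = 1"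
  shows "1 \<le> Re (cnj (w z0) * D * z0)"
proof (rule ccontr)
  define \<psi> where "\<psi> t = Re (cnj (w z0) * w (of_real t * z0)) - t" for t
  assume less: "\<not> ?thesis"
  have "((\<lambda>s. cnj (w z0) * w (s * z0)) has_field_derivative cnj (w z0) * (D * z0)) (at (of_real 1))"
    using w' by (auto intro!: derivative_eq_intros DERIV_chain2[where f=w])
  then have "((\<lambda>t. Re (cnj (w z0) * w (of_real t * z0))) has_field_derivative Re (cnj (w z0) * (D * z0))) (at 1)"
    by (rule has_real_derivative_Re_of_real)
  then have "(\<psi> has_field_derivative Re (cnj (w z0) * (D * z0)) - 1) (at 1)"
    unfolding \<psi>_def by (rule DERIV_diff[OF _ DERIV_ident])
  moreover have "Re (cnj (w z0) * (D * z0)) - 1 < 0"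
    using less by (simp add: mult.assoc)
  ultimately obtain d where "d > 0" and dec: "\<And>h. 0 < h \<Longrightarrow> h < d \<Longrightarrow> \<psi> 1 < \<psi> (1 - h)"
    using DERIV_neg_dec_left by blast
  define h where "h = min (d/2) (1/2)"
  have "0 < h" "h < d" "h \<le> 1/2" using \<open>d > 0\<close> by (auto simp: h_def)
  have "\<psi> 1 = 0" using eq by (simp add: \<psi>_def complex_norm_square[symmetric] mult.commute)
  moreover have "\<psi> (1 - h) \<le> 0"
  proof -
    have "Re (cnj (w z0) * w (of_real (1 - h) * z0)) \<le> norm (cnj (w z0) * w (of_real (1 - h) * z0))"
      by (rule complex_Re_le_cmod)
    also have "\<dots> \<le> 1 - h" using radial[of "1 - h"] \<open>0 < h\<close> \<open>h \<le> 1/2\<close> eq by (simp add: norm_mult)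
    finally show ?thesis by (simp add: \<psi>_def)
  qed
  ultimately show False using dec[OF \<open>0 < h\<close> \<open>h < d\<close>] by simp
qed

lemma Jack_lemma:
  fixes w :: "complex \<Rightarrow> complex"
  assumes hol: "w holomorphic_on S" and "open S" "cball 0 r \<subseteq> S" and "w 0 = 0"
    and lt: "\<And>z. norm z < r \<Longrightarrow> norm (w z) < 1" and le: "\<And>z. norm z \<le> r \<Longrightarrow> norm (w z) \<le> 1"
    and z0: "norm z0 = r" and wz0: "norm (w z0) = 1"
  obtains k where "1 \<le> k" "z0 * deriv w z0 = of_real k * w z0"
proof -
  have "r > 0" using z0 wz0 \<open>w 0 = 0\<close> by (metis norm_eq_zero norm_ge_zero order_le_less zero_neq_one)
  have w': "(w has_field_derivative deriv w z0) (at z0)"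
    using assms(2,3) z0 by (intro holomorphic_derivI[OF hol]) auto
  have "norm (w (of_real t * z0)) \<le> t" if "0 \<le> t" "t < 1" for t
  proof -
    have "w holomorphic_on ball 0 r" using hol assms(3) by (meson ball_subset_cball holomorphic_on_subset order_trans)
    moreover have "norm (of_real t * z0) < r" using that z0 \<open>r > 0\<close> by (simp add: norm_mult)
    ultimately have "r * norm (w (of_real t * z0)) \<le> t * r"
      using Schwarz_Lemma_ball[of w r "of_real t * z0"] \<open>w 0 = 0\<close> lt that z0 by (simp add: norm_mult)
    then show ?thesis using \<open>r > 0\<close> by (simp add: mult.commute)
  qed
  then have k: "1 \<le> Re (cnj (w z0) * deriv w z0 * z0)"
    using boundary_max_logderiv_ge_one[OF w' _ wz0] by blast
  have "Im (cnj (w z0) * deriv w z0 * z0) = 0"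
    using boundary_max_logderiv_real[OF w' _ wz0] le z0 by simp
  then have real: "cnj (w z0) * deriv w z0 * z0 = of_real (Re (cnj (w z0) * deriv w z0 * z0))"
    by (simp add: complex_eq_iff)
  have "w z0 * cnj (w z0) = 1"
    using wz0 complex_norm_square[of "w z0"] by simp
  then have "z0 * deriv w z0 = (w z0 * cnj (w z0)) * (z0 * deriv w z0)" by simp
  also have "\<dots> = of_real (Re (cnj (w z0) * deriv w z0 * z0)) * w z0"
    by (subst real[symmetric]) (simp add: ac_simps)
  finally show ?thesis using k that by blast
qed

lemma first_level_point:
  fixes u :: "complex \<Rightarrow> real"
  assumes cont: "continuous_on (ball 0 R) u" and "\<beta> < u 0" and z1: "norm z1 < R" "u z1 \<le> \<beta>"
  obtains z0 where "norm z0 < R" "u z0 = \<beta>"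
    "\<And>z. norm z < norm z0 \<Longrightarrow> \<beta> < u z" "\<And>z. norm z \<le> norm z0 \<Longrightarrow> \<beta> \<le> u z"
proof -
  have sub1: "cball 0 (norm z1) \<subseteq> ball 0 R" using z1 by (auto simp: dist_norm)
  define K where "K = cball 0 (norm z1) \<inter> u -` {..\<beta>}"
  have "closed K" unfolding K_def
    by (intro continuous_closed_preimage continuous_on_subset[OF cont sub1]) auto
  then have "compact K"
    unfolding compact_eq_bounded_closed by (auto intro: bounded_subset[OF bounded_cball] simp: K_def)
  moreover have "z1 \<in> K" using z1 by (simp add: K_def)
  ultimately obtain z0 where "z0 \<in> K" and min: "\<And>y. y \<in> K \<Longrightarrow> norm z0 \<le> norm y"
    using continuous_attains_inf[of K norm] continuous_on_norm_id by blast
  then have z0: "norm z0 \<le> norm z1" "u z0 \<le> \<beta>" by (auto simp: K_def)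
  have inside: "\<beta> < u z" if "norm z < norm z0" for z
    using min[of z] that z0 by (force simp: K_def)
  have "z0 \<noteq> 0" using z0 \<open>\<beta> < u 0\<close> by auto
  have sub0: "cball 0 (norm z0) \<subseteq> ball 0 R" using z0 z1 by (auto simp: dist_norm)
  define T where "T = cball 0 (norm z0) \<inter> u -` {\<beta>..}"
  have "closed T" unfolding T_def
    by (intro continuous_closed_preimage continuous_on_subset[OF cont sub0]) auto
  moreover have "ball 0 (norm z0) \<subseteq> T" using inside by (auto simp: T_def less_imp_le)
  ultimately have "closure (ball 0 (norm z0)) \<subseteq> T" by (rule closure_minimal[rotated])
  then have closed_disc: "\<beta> \<le> u z" if "norm z \<le> norm z0" for z
    using \<open>z0 \<noteq> 0\<close> that by (auto simp: T_def closure_ball)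
  have "u z0 = \<beta>" using closed_disc[of z0] z0 by simp
  moreover have "norm z0 < R" using z0 z1 by simp
  ultimately show ?thesis using that inside closed_disc by blast
qed

lemma Cayley_deriv_relation:
  fixes q :: "complex \<Rightarrow> complex"
  assumes "(q has_field_derivative D) (at z)" "q z + c \<noteq> 0" "c + 1 \<noteq> 0"
    and "z * deriv (\<lambda>z. (q z - 1) / (q z + c)) z = K * ((q z - 1) / (q z + c))"
  shows "z * D = K * (q z - 1) * (q z + c) / (c + 1)"
proof -
  have "((\<lambda>z. (q z - 1) / (q z + c)) has_field_derivative D * (c + 1) / (q z + c)\<^sup>2) (at z)"
    using assms(1,2) by (auto intro!: derivative_eq_intros simp: power2_eq_square algebra_simps)
  then have "z * (D * (c + 1) / (q z + c)\<^sup>2) = K * ((q z - 1) / (q z + c))"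
    using assms(4) by (simp add: DERIV_imp_deriv)
  then have "z * D * (c + 1) = K * ((q z - 1) / (q z + c)) * (q z + c)\<^sup>2"
    using assms(2) by (simp add: field_simps)
  also have "\<dots> = K * (q z - 1) * (q z + c)"
    using assms(2) by (simp add: power2_eq_square)
  finally show ?thesis
    using assms(3) by (simp add: eq_divide_eq)
qed

lemma Re_level_boundary_point:
  fixes q :: "complex \<Rightarrow> complex"
  assumes hol: "q holomorphic_on ball 0 R" and "q 0 = 1" and "\<beta> < 1"
    and z1: "norm z1 < R" "Re (q z1) \<le> \<beta>"
  obtains z0 k where "norm z0 < R" "z0 \<noteq> 0" "Re (q z0) = \<beta>" "1 \<le> k"
    "z0 * deriv q z0 = of_real k * (q z0 - 1) * (q z0 + of_real (1 - 2*\<beta>)) / of_real (2*(1-\<beta>))"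
proof -
  have "continuous_on (ball 0 R) (\<lambda>z. Re (q z))"
    using hol by (intro continuous_intros holomorphic_on_imp_continuous_on)
  then obtain z0 where z0: "norm z0 < R" "Re (q z0) = \<beta>"
    and inside: "\<And>z. norm z < norm z0 \<Longrightarrow> \<beta> < Re (q z)"
    and closed_disc: "\<And>z. norm z \<le> norm z0 \<Longrightarrow> \<beta> \<le> Re (q z)"
    using first_level_point[of R "\<lambda>z. Re (q z)" \<beta> z1] \<open>q 0 = 1\<close> \<open>\<beta> < 1\<close> z1 by auto
  have "z0 \<noteq> 0" using z0 \<open>q 0 = 1\<close> \<open>\<beta> < 1\<close> by auto
  define c where "c = complex_of_real (1 - 2*\<beta>)"
  define w where "w z = (q z - 1) / (q z + c)" for z
  have den: "q z + c \<noteq> 0" if "norm z \<le> norm z0" for z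
  proof -
    have "1 - \<beta> \<le> Re (q z + c)" using closed_disc[OF that] by (simp add: c_def)
    then show ?thesis using \<open>\<beta> < 1\<close> by force
  qed
  define U where "U = ball 0 R \<inter> (\<lambda>z. q z + c) -` (-{0})"
  have "open U" unfolding U_def
    by (intro continuous_open_preimage continuous_intros holomorphic_on_imp_continuous_on[OF hol]) auto
  moreover have "w holomorphic_on U"
    unfolding w_def U_def by (intro holomorphic_intros holomorphic_on_subset[OF hol]) auto
  moreover have "cball 0 (norm z0) \<subseteq> U" using den z0 by (auto simp: U_def)
  moreover have "w 0 = 0" by (simp add: w_def \<open>q 0 = 1\<close>)
  moreover have "norm (w z) < 1" if "norm z < norm z0" for z
    using norm_sub_one_less_iff[OF \<open>\<beta> < 1\<close>, of "q z"] inside[OF that] den[of z] that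
    by (simp add: w_def c_def norm_divide)
  moreover have "norm (w z) \<le> 1" if "norm z \<le> norm z0" for z
    using norm_sub_one_le_iff[OF \<open>\<beta> < 1\<close>, of "q z"] closed_disc[OF that] den[OF that]
    by (simp add: w_def c_def norm_divide divide_le_eq_1)
  moreover have "norm (w z0) = 1"
    using norm_sub_one_le_iff[OF \<open>\<beta> < 1\<close>, of "q z0"] norm_sub_one_less_iff[OF \<open>\<beta> < 1\<close>, of "q z0"]
      z0(2) den[of z0] by (simp add: w_def c_def norm_divide)
  ultimately obtain k where "1 \<le> k" and k: "z0 * deriv w z0 = of_real k * w z0"
    using Jack_lemma[of w U "norm z0" z0] by blast
  have "(q has_field_derivative deriv q z0) (at z0)"
    using hol z0 by (intro holomorphic_derivI[of _ "ball 0 R"]) auto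
  moreover have "c + 1 = of_real (2*(1-\<beta>))" "c + 1 \<noteq> 0" using \<open>\<beta> < 1\<close> by (simp_all add: c_def)
  ultimately have "z0 * deriv q z0 = of_real k * (q z0 - 1) * (q z0 + c) / of_real (2*(1-\<beta>))"
    using Cayley_deriv_relation[OF _ den[of z0] _ k[unfolded w_def[abs_def]]] by simp
  then show ?thesis using that z0 \<open>z0 \<noteq> 0\<close> \<open>1 \<le> k\<close> by (simp add: c_def)
qed

text \<open>
  \<open>jack_gamma \<beta>\<close> is the least value of \<open>-Re (z\<^sub>0 q'(z\<^sub>0)/q(z\<^sub>0))\<close> over the boundary points produced by
  \<open>Re_level_boundary_point\<close>; in these terms \<open>rho1 p \<lambda> \<delta> = p - jack_gamma (\<delta>/c)\<close>.
\<close>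

definition jack_gamma :: "real \<Rightarrow> real" where
  "jack_gamma \<beta> = (if \<beta> \<le> 1/2 then \<beta> / (2*(1-\<beta>)) else (1-\<beta>) / (2*\<beta>))"

lemma jack_gamma_le:
  fixes \<beta> S k :: real
  assumes "0 \<le> \<beta>" "\<beta> < 1" "0 \<le> S" "0 < \<beta>\<^sup>2 + S" "1 \<le> k"
  shows "jack_gamma \<beta> \<le> k * (\<beta> * (S + (1-\<beta>)\<^sup>2) / (2*(1-\<beta>)*(\<beta>\<^sup>2 + S)))"
proof -
  define D where "D = 2*(1-\<beta>)*(\<beta>\<^sup>2 + S)"
  have "0 < D" using assms by (simp add: D_def)
  have "jack_gamma \<beta> * D \<le> \<beta> * (S + (1-\<beta>)\<^sup>2)"
  proof (cases "\<beta> \<le> 1/2")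
    case True
    then have "\<beta>\<^sup>2 \<le> (1-\<beta>)\<^sup>2" using assms by (intro power_mono) auto
    then have "\<beta> * (\<beta>\<^sup>2 + S) \<le> \<beta> * (S + (1-\<beta>)\<^sup>2)" using assms by (intro mult_left_mono) auto
    moreover have "jack_gamma \<beta> * D = \<beta> * (\<beta>\<^sup>2 + S)"
      using True assms(2) by (simp add: jack_gamma_def D_def)
    ultimately show ?thesis by simp
  next
    case False
    then have "(1-\<beta>)\<^sup>2 \<le> \<beta>\<^sup>2" using assms by (intro power_mono) auto
    then have "S * (1-\<beta>)\<^sup>2 \<le> S * \<beta>\<^sup>2" using assms(3) by (rule mult_left_mono)
    then have "(1-\<beta>)\<^sup>2 * (\<beta>\<^sup>2 + S) \<le> \<beta> * (S + (1-\<beta>)\<^sup>2) * \<beta>"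
      by (simp add: algebra_simps power2_eq_square)
    moreover have "jack_gamma \<beta> * D = (1-\<beta>)\<^sup>2 * (\<beta>\<^sup>2 + S) / \<beta>"
      using False by (simp add: jack_gamma_def D_def power2_eq_square field_simps)
    ultimately show ?thesis using False by (simp add: divide_le_eq)
  qed
  then have "jack_gamma \<beta> \<le> \<beta> * (S + (1-\<beta>)\<^sup>2) / D" using \<open>0 < D\<close> by (simp add: le_divide_eq)
  also have "\<dots> \<le> k * (\<beta> * (S + (1-\<beta>)\<^sup>2) / D)"
    using mult_right_mono[of 1 k "\<beta> * (S + (1-\<beta>)\<^sup>2) / D"] assms \<open>0 < D\<close> by simp
  finally show ?thesis by (simp add: D_def)
qed

lemma Re_boundary_logderiv_le:
  fixes Q :: complex and \<beta> k :: real
  assumes "Re Q = \<beta>" "0 \<le> \<beta>" "\<beta> < 1" "Q \<noteq> 0" "1 \<le> k"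
  shows "Re (of_real k * (Q - 1) * (Q + of_real (1 - 2*\<beta>)) / of_real (2*(1-\<beta>)) / Q) \<le> - jack_gamma \<beta>"
proof -
  obtain y where Q_eq: "Q = Complex \<beta> y" using assms(1) complex.collapse by metis
  define S where "S = y\<^sup>2"
  have prod: "(Q - 1) * (Q + of_real (1 - 2*\<beta>)) = of_real (- (S + (1-\<beta>)\<^sup>2))"
    unfolding Q_eq by (simp add: complex_eq_iff S_def power2_eq_square algebra_simps)
  have num: "of_real k * (Q - 1) * (Q + of_real (1 - 2*\<beta>)) / of_real (2*(1-\<beta>))
      = of_real (k * - (S + (1-\<beta>)\<^sup>2) / (2*(1-\<beta>)))"
    by (simp only: mult.assoc prod of_real_mult of_real_divide)
  have norm_Q: "(cmod Q)\<^sup>2 = \<beta>\<^sup>2 + S" unfolding Q_eq by (simp add: cmod_power2 S_def)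
  then have norm_pos: "0 < \<beta>\<^sup>2 + S" using \<open>Q \<noteq> 0\<close> by (metis zero_less_norm_iff zero_less_power)
  have "Re (of_real k * (Q - 1) * (Q + of_real (1 - 2*\<beta>)) / of_real (2*(1-\<beta>)) / Q)
      = (k * - (S + (1-\<beta>)\<^sup>2) / (2*(1-\<beta>))) * \<beta> / (\<beta>\<^sup>2 + S)"
    by (simp only: num Re_divide' norm_Q) (simp add: assms(1))
  also have "\<dots> = - (k * (\<beta> * (S + (1-\<beta>)\<^sup>2) / (2*(1-\<beta>)*(\<beta>\<^sup>2 + S))))"
    by (simp only: times_divide_eq_left times_divide_eq_right divide_divide_eq_left minus_divide_left
        minus_mult_right minus_mult_left mult_ac)
  also have "\<dots> \<le> - jack_gamma \<beta>"
    using jack_gamma_le[OF assms(2,3) _ norm_pos assms(5)] by (simp add: S_def)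
  finally show ?thesis .
qed

theorem Re_gt_of_Re_logderiv_gt:
  fixes q :: "complex \<Rightarrow> complex"
  assumes hol: "q holomorphic_on ball 0 R" and "q 0 = 1" and "0 \<le> \<beta>" "\<beta> < 1"
    and nz: "\<And>z. norm z < R \<Longrightarrow> z \<noteq> 0 \<Longrightarrow> q z \<noteq> 0"
    and logderiv: "\<And>z. norm z < R \<Longrightarrow> z \<noteq> 0 \<Longrightarrow> - jack_gamma \<beta> < Re (z * deriv q z / q z)"
    and "norm z < R"
  shows "\<beta> < Re (q z)"
proof (rule ccontr)
  assume "\<not> ?thesis"
  then have "Re (q z) \<le> \<beta>" by simp
  then obtain z0 k where z0: "norm z0 < R" "z0 \<noteq> 0" "Re (q z0) = \<beta>" and "1 \<le> k"
    and eq: "z0 * deriv q z0 = of_real k * (q z0 - 1) * (q z0 + of_real (1 - 2*\<beta>)) / of_real (2*(1-\<beta>))"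
    by (rule Re_level_boundary_point[OF hol \<open>q 0 = 1\<close> \<open>\<beta> < 1\<close> \<open>norm z < R\<close>])
  have "Re (z0 * deriv q z0 / q z0) \<le> - jack_gamma \<beta>"
    unfolding eq by (rule Re_boundary_logderiv_le[OF z0(3) \<open>0 \<le> \<beta>\<close> \<open>\<beta> < 1\<close> nz[OF z0(1,2)] \<open>1 \<le> k\<close>])
  with logderiv[OF z0(1,2)] show False by simp
qed

lemma powser_factor_power:
  fixes a :: "nat \<Rightarrow> complex"
  assumes sums: "\<And>z. z \<in> ball 0 R \<Longrightarrow> (\<lambda>k. a k * z ^ k) sums f z"
    and low: "\<And>k. k < p \<Longrightarrow> a k = 0"
  obtains g where "g holomorphic_on ball 0 R" "g 0 = a p" "\<And>z. z \<in> ball 0 R \<Longrightarrow> f z = z ^ p * g z"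
proof
  define g where "g z = (\<Sum>n. a (n + p) * z ^ n)" for z
  have g_sums: "(\<lambda>n. a (n + p) * z ^ n) sums g z" if "z \<in> ball 0 R" for z
    using sums[OF that] summable_powser_ignore_initial_segment[of a p z]
    by (simp add: g_def sums_iff summable_sums)
  show "g 0 = a p" by (simp add: g_def)
  show "f z = z ^ p * g z" if z: "z \<in> ball 0 R" for z
  proof -
    have "(\<lambda>n. a (n + p) * z ^ (n + p)) sums f z"
      using sums_split_initial_segment[OF sums[OF z], of p] low by simp
    moreover have "(\<lambda>n. a (n + p) * z ^ (n + p)) sums (z ^ p * g z)"
      using sums_mult[OF g_sums[OF z], of "z ^ p"] by (simp add: power_add mult_ac)
    ultimately show ?thesis by (rule sums_unique2)
  qed
  show "g holomorphic_on ball 0 R"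
  proof (subst holomorphic_on_open, simp, intro ballI)
    fix z :: complex assume z: "z \<in> ball 0 R"
    define K where "K = complex_of_real ((R + norm z) / 2)"
    have "0 \<le> R + norm z" using z norm_ge_zero[of z] by (simp, linarith)
    then have "norm K = (R + norm z) / 2" unfolding K_def norm_of_real by simp
    then have "K \<in> ball 0 R" "norm z < norm K" using z by auto
    then have "DERIV g z :> (\<Sum>n. diffs (\<lambda>n. a (n + p)) n * z ^ n)"
      unfolding g_def[abs_def] using g_sums sums_summable by (intro termdiffs_strong) blast+
    then show "\<exists>f'. DERIV g z :> f'" by blast
  qed
qed

lemma deriv_Flam:
  assumes "open S" "f holomorphic_on S" "z \<in> S"
  shows "deriv (Flam lam f) z = deriv f z + of_real lam * z * deriv (deriv f) z"
proof -
  have "(f has_field_derivative deriv f z) (at z)"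
    using assms by (intro holomorphic_derivI)
  moreover have "(deriv f has_field_derivative deriv (deriv f) z) (at z)"
    using assms by (intro holomorphic_derivI[OF holomorphic_deriv])
  ultimately have "(Flam lam f has_field_derivative
      (1 - of_real lam) * deriv f z + (of_real lam * deriv f z + of_real lam * z * deriv (deriv f) z)) (at z)"
    unfolding Flam_def[abs_def] by (auto intro!: derivative_eq_intros)
  then show ?thesis by (simp add: DERIV_imp_deriv algebra_simps)
qed

lemma Flam_power_mult:
  fixes g :: "complex \<Rightarrow> complex"
  assumes "open S" "g holomorphic_on S" "\<And>z. z \<in> S \<Longrightarrow> f z = z ^ p * g z" "z \<in> S"
  shows "Flam lam f z = z ^ p * ((1 + of_real lam * (of_nat p - 1)) * g z + of_real lam * z * deriv g z)"
proof -
  have "(g has_field_derivative deriv g z) (at z)"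
    using assms by (intro holomorphic_derivI)
  then have "((\<lambda>z. z ^ p * g z) has_field_derivative of_nat p * z ^ (p - 1) * g z + z ^ p * deriv g z) (at z)"
    by (auto intro!: derivative_eq_intros)
  then have "(f has_field_derivative of_nat p * z ^ (p - 1) * g z + z ^ p * deriv g z) (at z)"
    using assms by (auto intro: has_field_derivative_transform_within_open)
  then have "z * deriv f z = z * (of_nat p * z ^ (p - 1)) * g z + z * z ^ p * deriv g z"
    by (simp add: DERIV_imp_deriv algebra_simps)
  also have "\<dots> = of_nat p * z ^ p * g z + z * z ^ p * deriv g z"
    by (cases p) simp_all
  finally have zf': "z * deriv f z = of_nat p * z ^ p * g z + z * z ^ p * deriv g z" .
  have "Flam lam f z = (1 - of_real lam) * (z ^ p * g z) + of_real lam * (z * deriv f z)"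
    using assms(3,4) by (simp add: Flam_def mult.assoc)
  also have "\<dots> = z ^ p * ((1 + of_real lam * (of_nat p - 1)) * g z + of_real lam * z * deriv g z)"
    unfolding zf' by (simp add: algebra_simps)
  finally show ?thesis .
qed

lemma Flam_factor:
  fixes g :: "complex \<Rightarrow> complex"
  assumes holg: "g holomorphic_on ball 0 R" and "g 0 = 1"
    and fg: "\<And>z. z \<in> ball 0 R \<Longrightarrow> f z = z ^ p * g z"
    and c: "c = 1 + lam * (real p - 1)" "c \<noteq> 0"
  obtains q where "q holomorphic_on ball 0 R" "q 0 = 1"
    "\<And>z. z \<in> ball 0 R \<Longrightarrow> Flam lam f z = of_real c * z ^ p * q z"
proof
  define q where "q z = (of_real c * g z + of_real lam * z * deriv g z) / of_real c" for z
  show "q holomorphic_on ball 0 R"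
    unfolding q_def using holg by (intro holomorphic_intros holomorphic_deriv) auto
  show "q 0 = 1" using \<open>g 0 = 1\<close> c(2) by (simp add: q_def)
  have c_eq: "1 + of_real lam * (of_nat p - 1) = complex_of_real c" by (simp add: c(1))
  show "Flam lam f z = of_real c * z ^ p * q z" if "z \<in> ball 0 R" for z
    using Flam_power_mult[OF _ holg fg that, of lam] c(2) unfolding c_eq by (simp add: q_def)
qed

lemma logderiv_power_mult:
  fixes q :: "complex \<Rightarrow> complex"
  assumes "open S" "q holomorphic_on S" "\<And>z. z \<in> S \<Longrightarrow> F z = C * z ^ p * q z"
    and "z \<in> S" "z \<noteq> 0" "C \<noteq> 0" "q z \<noteq> 0"
  shows "z * deriv F z / F z = of_nat p + z * deriv q z / q z"
proof -
  have "(q has_field_derivative deriv q z) (at z)"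
    using assms by (intro holomorphic_derivI)
  then have "((\<lambda>z. C * z ^ p * q z) has_field_derivative C * (of_nat p * z ^ (p - 1) * q z + z ^ p * deriv q z)) (at z)"
    by (auto intro!: derivative_eq_intros simp: algebra_simps)
  then have "(F has_field_derivative C * (of_nat p * z ^ (p - 1) * q z + z ^ p * deriv q z)) (at z)"
    using assms by (auto intro: has_field_derivative_transform_within_open)
  then have "deriv F z = C * (of_nat p * z ^ (p - 1) * q z + z ^ p * deriv q z)"
    by (rule DERIV_imp_deriv)
  moreover have "z * (of_nat p * z ^ (p - 1)) = of_nat p * z ^ p"
    by (cases p) auto
  ultimately show ?thesis
    using assms(3-7) by (simp add: field_simps)
qed

lemma rho1_eq_jack_gamma:
  assumes "0 < 1 + lam * (real p - 1)"
  shows "rho1 p lam \<delta> = real p - jack_gamma (\<delta> / (1 + lam * (real p - 1)))"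
proof -
  define c where "c = 1 + lam * (real p - 1)"
  have "0 < c" using assms by (simp add: c_def)
  have rho1_c: "rho1 p lam \<delta> = (if \<delta> \<le> c/2 then real p - \<delta> / (2*(c-\<delta>)) else real p - (c-\<delta>) / (2*\<delta>))"
    by (simp add: rho1_def Let_def c_def)
  have "jack_gamma (\<delta> / c) = (if \<delta> \<le> c/2 then \<delta> / (2*(c-\<delta>)) else (c-\<delta>) / (2*\<delta>))"
  proof (cases "\<delta> \<le> c / 2")
    case True
    then have "\<delta> / c \<le> 1/2" "0 < c - \<delta>" using \<open>0 < c\<close> by (simp_all add: field_simps)
    then have "jack_gamma (\<delta> / c) = \<delta> / c / (2 * (1 - \<delta> / c))" by (simp add: jack_gamma_def)
    also have "\<dots> = \<delta> / (2 * (c - \<delta>))"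
      using \<open>0 < c\<close> \<open>0 < c - \<delta>\<close> by (simp add: divide_simps)
    finally show ?thesis using True by simp
  next
    case False
    then have "\<not> \<delta> / c \<le> 1/2" "0 < \<delta>" using \<open>0 < c\<close> by (simp_all add: field_simps)
    then have "jack_gamma (\<delta> / c) = (1 - \<delta> / c) / (2 * (\<delta> / c))" by (simp add: jack_gamma_def)
    also have "\<dots> = (c - \<delta>) / (2 * \<delta>)"
      using \<open>0 < c\<close> \<open>0 < \<delta>\<close> by (simp add: divide_simps)
    finally show ?thesis using False by simp
  qed
  then show ?thesis unfolding rho1_c c_def[symmetric] by simp
qed

theorem corollary3p10:
  fixes p :: nat and lam \<delta> :: real and f :: "complex \<Rightarrow> complex" and a :: "nat \<Rightarrow> complex"
  assumes "p \<ge> 1"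
    and "0 \<le> lam" "lam \<le> 1"
    and "f holomorphic_on ball 0 1"
    and "\<And>z. z \<in> ball 0 1 \<Longrightarrow> (\<lambda>k. a k * z ^ k) sums f z"
    and "\<And>k. k < p \<Longrightarrow> a k = 0" and "a p = 1"
    and "\<And>z. z \<in> ball 0 1 \<Longrightarrow> z \<noteq> 0 \<Longrightarrow> Flam lam f z * deriv (Flam lam f) z \<noteq> 0"
    and "0 \<le> \<delta>" "\<delta> < 1 + lam * (real p - 1)"
    and "\<And>z. z \<in> ball 0 1 \<Longrightarrow> z \<noteq> 0 \<Longrightarrow>
           Re ((z * deriv f z + of_real lam * z^2 * deriv (deriv f) z) /
               ((1 - of_real lam) * f z + of_real lam * z * deriv f z)) > rho1 p lam \<delta>"
  shows "\<forall>z \<in> ball 0 1. z \<noteq> 0 \<longrightarrow> Re (Flam lam f z / z ^ p) > \<delta>"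
proof -
  obtain g where holg: "g holomorphic_on ball 0 1" and "g 0 = 1"
    and fg: "\<And>z. z \<in> ball 0 1 \<Longrightarrow> f z = z ^ p * g z"
    using powser_factor_power[OF assms(5,6)] assms(7) by metis
  define c where "c = 1 + lam * (real p - 1)"
  have "1 \<le> c" using assms(1,2) by (simp add: c_def)
  then have "c \<noteq> 0" by simp
  obtain q where holq: "q holomorphic_on ball 0 1" and "q 0 = 1"
    and Fq: "\<And>z. z \<in> ball 0 1 \<Longrightarrow> Flam lam f z = of_real c * z ^ p * q z"
    using Flam_factor[OF holg \<open>g 0 = 1\<close> fg c_def \<open>c \<noteq> 0\<close>] by blast
  have q_nz: "q z \<noteq> 0" if "z \<in> ball 0 1" "z \<noteq> 0" for z
    using assms(8)[OF that] Fq[OF that(1)] by auto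
  have logderiv_q: "- jack_gamma (\<delta> / c) < Re (z * deriv q z / q z)" if "norm z < 1" "z \<noteq> 0" for z
  proof -
    have "z * deriv (Flam lam f) z / Flam lam f z = of_nat p + z * deriv q z / q z"
      using logderiv_power_mult[OF _ holq Fq] that q_nz \<open>1 \<le> c\<close> by simp
    moreover have "z * deriv (Flam lam f) z = z * deriv f z + of_real lam * z^2 * deriv (deriv f) z"
      using deriv_Flam[OF _ assms(4)] that by (simp add: algebra_simps power2_eq_square)
    ultimately show ?thesis
      using assms(11)[of z] that rho1_eq_jack_gamma[of lam p \<delta>] \<open>1 \<le> c\<close> by (simp add: Flam_def c_def)
  qed
  have "\<delta> / c < Re (q z)" if "norm z < 1" for z
    using Re_gt_of_Re_logderiv_gt[OF holq \<open>q 0 = 1\<close> _ _ q_nz logderiv_q that] assms(9,10) \<open>1 \<le> c\<close>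
    by (simp add: c_def)
  then show ?thesis
    using Fq \<open>1 \<le> c\<close> by (auto simp: field_simps)
qed

end
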